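(* Consider two user types $k\in\{1,2\}$ (write $-k$ for the other type), with $N_k$ users of type $k$, individual arrival rate $\lambda_k$, departure rate $\mu_k$, and instantaneous utility of use $u_k(\tau)=\alpha_k-\beta_k/\tau$. Suppose the service provider uses TDMA, has no admission control (every arriving user is admitted), and offers the pricing policy $\mathbf P=(\phi,(p_s,q))$. When the other users play according to the profile $\pi=(\pi_1,\pi_2)$, $\pi_j=[\pi_{j,0},\pi_{j,1}]$, the expected utility of use and expected cost of a particular type-$k$ user playing $\pi_k'=[\pi_{k,0}',\pi_{k,1}']$ are $$U_k(\theta,\alpha,(\pi;\pi_k'))=\pi_{k,1}'\,\Delta T\,\frac{\lambda_k}{\lambda_k+\mu_k}\Big[\alpha_k-\beta_k\Big(1+\frac{\lambda_k(N_k-1)}{\lambda_k+\mu_k}\pi_{k,1}+\frac{\lambda_{-k}N_{-k}}{\lambda_{-k}+\mu_{-k}}\pi_{-k,1}\Big)\Big]$$ and $$C_k(\theta,\alpha,\mathbf P,(\pi;\pi_k'))=\pi_{k,1}'\big(p_s+q\,\hat B_k(\theta,\alpha,\pi)\big),$$ where $$\hat B_k(\theta,\alpha,\pi)=\sum_{n_{k,1}=1}^{N_k}\sum_{n_{-k,1}=0}^{N_{-k}}\binom{N_k-1}{n_{k,1}-1}\pi_{k,1}^{n_{k,1}-1}(1-\pi_{k,1})^{N_k-n_{k,1}}\binom{N_{-k}}{n_{-k,1}}\pi_{-k,1}^{n_{-k,1}}(1-\pi_{-k,1})^{N_{-k}-n_{-k,1}}B_k^1(\theta,\alpha,\mathbf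 n),$$ with $B_k^1(\theta,\alpha,\mathbf n)=\Delta T\sum_{\mathbf x}\Pr(\mathbf X(\infty)=\mathbf x)\frac{x_{k,1}}{n_{k,1}}\tau_{k,1}(\mathbf x)$ and $\tau_{k,1}(\mathbf x)=\frac{1}{x_{k,1}+x_{-k,1}}$.
   Context: Plan $0$ is the dummy plan $\phi$ (no subscription); plan $1$ charges subscription fee $p_s\ge0$ per billing period of length $\Delta T$ plus $q\ge0$ per unit of guaranteed data rate. Each type-$k$ user independently chooses plan $1$ with probability $\pi_{k,1}$ (the particular user with probability $\pi_{k,1}'$), fixed thereafter; the realization gives $n_{j,1}$ type-$j$ users on plan $1$ ($\mathbf n=(n_{1,1},n_{2,1})$). Given $\mathbf n$, each plan-1 user alternates: while offline it arrives after an exponential time of rate $\lambda_j$, while online it departs after an exponential time of rate $\mu_j$, independently; $\mathbf X(\infty)$ denotes the steady-state system state, with $x_{j,1}$ online type-$j$ plan-1 users. Under TDMA with normalized bandwidth $1$ the bandwidth is shared equally, so an online user's guaranteed throughput is $\tau(\mathbf x)=1/(x_{1,1}+x_{2,1})$. Definitions: $V_k^1(\mathbf n)=\Delta T\sum_{\mathbf x}\Pr(\mathbf X(\infty)=\mathbf x)\frac{x_{k,1}}{n_{k,1}}u_k(\tau(\mathbf x))$; $U_k(\theta,\alpha,(\pi;\pi_k'))=\pi_{k,1}'\sum_{\mathbf n:n_{k,1}\ge1}\Pr(\mathbf n\mid k,1)V_k^1(\mathbf n)$ and $C_k(\theta,\alpha,\mathbf P,(\pi;\pi_k'))=\pi_{k,1}'\big(p_s+\sum_{\mathbf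 n:n_{k,1}\ge1}\Pr(\mathbf n\mid k,1)\,q\,B_k^1(\theta,\alpha,\mathbf n)\big)$, where $\Pr(\mathbf n\mid k,1)$ is the probability of the realization $\mathbf n$ given that the particular user chose plan $1$ (the other users choosing independently according to $\pi$). *)

theory Defs
  imports "HOL-Probability.Probability_Mass_Function"
begin

(* User types are indexed by the naturals 1 and 2; the other type of k is 3 - k. *)
definition oth :: "nat \<Rightarrow> nat" where "oth k = 3 - k"

(* Pairs (a,b) always store the type-1 component first and the type-2 component second. *)
definition comp :: "nat \<Rightarrow> nat \<times> nat \<Rightarrow> nat" where
  "comp k z = (if k = 1 then fst z else snd z)"

definition mkp :: "nat \<Rightarrow> nat \<Rightarrow> nat \<Rightarrow> nat \<times> nat" where
  "mkp k a b = (if k = 1 then (a, b) else (b, a))"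

(* state space of X given n = (n_{1,1}, n_{2,1}) *)
definition states :: "nat \<times> nat \<Rightarrow> (nat \<times> nat) set" where
  "states n = {0..fst n} \<times> {0..snd n}"

(* transition rate from x to y of the CTMC: each offline plan-1 user of type j
   comes online at rate lambda_j, each online one leaves at rate mu_j *)
definition rate :: "(nat \<Rightarrow> real) \<Rightarrow> (nat \<Rightarrow> real) \<Rightarrow> nat \<times> nat \<Rightarrow> nat \<times> nat \<Rightarrow> nat \<times> nat \<Rightarrow> real" where
  "rate lam mu n x y =
     (if fst y = fst x + 1 \<and> snd y = snd x then real (fst n - fst x) * lam 1 else 0)
   + (if fst x = fst y + 1 \<and> snd y = snd x then real (fst x) * mu 1 else 0)
   + (if snd y = snd x + 1 \<and> fst y = fst x then real (snd n - snd x) * lam 2 else 0)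
   + (if snd x = snd y + 1 \<and> fst y = fst x then real (snd x) * mu 2 else 0)"

(* p is a steady-state (stationary) distribution of the chain given n: Pr(X(\<infinity>) = x) = p x *)
definition stationary :: "(nat \<Rightarrow> real) \<Rightarrow> (nat \<Rightarrow> real) \<Rightarrow> nat \<times> nat \<Rightarrow> (nat \<times> nat \<Rightarrow> real) \<Rightarrow> bool" where
  "stationary lam mu n p \<longleftrightarrow>
     (\<forall>x. 0 \<le> p x) \<and> (\<forall>x. x \<notin> states n \<longrightarrow> p x = 0) \<and> (\<Sum>x\<in>states n. p x) = 1 \<and>
     (\<forall>x\<in>states n. p x * (\<Sum>y\<in>states n. rate lam mu n x y)
                    = (\<Sum>y\<in>states n. p y * rate lam mu n y x))"

definition tau :: "nat \<times> nat \<Rightarrow> real" where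
  "tau x = 1 / real (fst x + snd x)"

definition util :: "(nat \<Rightarrow> real) \<Rightarrow> (nat \<Rightarrow> real) \<Rightarrow> nat \<Rightarrow> real \<Rightarrow> real" where
  "util al be k t = al k - be k / t"

(* Pr(n | k,1): the particular type-k user is on plan 1, the others choose independently *)
definition cond_n :: "(nat \<Rightarrow> nat) \<Rightarrow> (nat \<Rightarrow> real) \<Rightarrow> nat \<Rightarrow> (nat \<times> nat) pmf" where
  "cond_n N pr k =
     (if k = 1 then pair_pmf (map_pmf Suc (binomial_pmf (N 1 - 1) (pr 1))) (binomial_pmf (N 2) (pr 2))
      else pair_pmf (binomial_pmf (N 1) (pr 1)) (map_pmf Suc (binomial_pmf (N 2 - 1) (pr 2))))"

definition nset :: "(nat \<Rightarrow> nat) \<Rightarrow> nat \<Rightarrow> (nat \<times> nat) set" where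
  "nset N k = {n \<in> {0..N 1} \<times> {0..N 2}. 1 \<le> comp k n}"

definition V1 :: "real \<Rightarrow> (nat \<Rightarrow> real) \<Rightarrow> (nat \<Rightarrow> real) \<Rightarrow> (nat \<times> nat \<Rightarrow> nat \<times> nat \<Rightarrow> real)
                  \<Rightarrow> nat \<Rightarrow> nat \<times> nat \<Rightarrow> real" where
  "V1 dT al be P k n = dT * (\<Sum>x\<in>states n. P n x * (real (comp k x) / real (comp k n)) * util al be k (tau x))"

definition B1 :: "real \<Rightarrow> (nat \<times> nat \<Rightarrow> nat \<times> nat \<Rightarrow> real) \<Rightarrow> nat \<Rightarrow> nat \<times> nat \<Rightarrow> real" where
  "B1 dT P k n = dT * (\<Sum>x\<in>states n. P n x * (real (comp k x) / real (comp k n)) * tau x)"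

definition Uk :: "real \<Rightarrow> (nat \<Rightarrow> nat) \<Rightarrow> (nat \<Rightarrow> real) \<Rightarrow> (nat \<Rightarrow> real) \<Rightarrow>
                  (nat \<times> nat \<Rightarrow> nat \<times> nat \<Rightarrow> real) \<Rightarrow> (nat \<Rightarrow> real) \<Rightarrow> real \<Rightarrow> nat \<Rightarrow> real" where
  "Uk dT N al be P pr pi' k = pi' * (\<Sum>n\<in>nset N k. pmf (cond_n N pr k) n * V1 dT al be P k n)"

definition Ck :: "real \<Rightarrow> (nat \<Rightarrow> nat) \<Rightarrow> (nat \<times> nat \<Rightarrow> nat \<times> nat \<Rightarrow> real) \<Rightarrow> real \<Rightarrow> real \<Rightarrow>
                  (nat \<Rightarrow> real) \<Rightarrow> real \<Rightarrow> nat \<Rightarrow> real" where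
  "Ck dT N P ps q pr pi' k = pi' * (ps + (\<Sum>n\<in>nset N k. pmf (cond_n N pr k) n * q * B1 dT P k n))"

definition Bhat :: "real \<Rightarrow> (nat \<Rightarrow> nat) \<Rightarrow> (nat \<times> nat \<Rightarrow> nat \<times> nat \<Rightarrow> real) \<Rightarrow> (nat \<Rightarrow> real) \<Rightarrow> nat \<Rightarrow> real" where
  "Bhat dT N P pr k =
     (\<Sum>a=1..N k. \<Sum>b=0..N (oth k).
        real ((N k - 1) choose (a - 1)) * pr k ^ (a - 1) * (1 - pr k) ^ (N k - a)
      * real (N (oth k) choose b) * pr (oth k) ^ b * (1 - pr (oth k)) ^ (N (oth k) - b)
      * B1 dT P k (mkp k a b))"

end

theory Submission
  imports Defs
begin

text \<open>Given the realization \<open>n\<close>, the plan-1 users are independent on/off chains, so a user of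
type \<open>j\<close> is online with probability \<open>\<rho>\<^sub>j = \<lambda>\<^sub>j / (\<lambda>\<^sub>j + \<mu>\<^sub>j)\<close>. Instead of solving for the stationary law, we test
the balance equations against \<open>x\<^sub>k\<close>, \<open>x\<^sub>k\<^sup>2\<close> and \<open>x\<^sub>1 x\<^sub>2\<close>: the generator maps each of these to a polynomial
of degree at most two, which yields the binomial moments \<open>E x\<^sub>k = n\<^sub>k \<rho>\<^sub>k\<close>,
\<open>E x\<^sub>k\<^sup>2 = n\<^sub>k \<rho>\<^sub>k (1 + (n\<^sub>k - 1) \<rho>\<^sub>k)\<close> and \<open>E x\<^sub>1 x\<^sub>2 = n\<^sub>1 \<rho>\<^sub>1 n\<^sub>2 \<rho>\<^sub>2\<close>. Under TDMA,
\<open>x\<^sub>k u\<^sub>k(\<tau>(x)) = \<alpha>\<^sub>k x\<^sub>k - \<beta>\<^sub>k (x\<^sub>k\<^sup>2 + x\<^sub>1 x\<^sub>2)\<close>, so \<open>V\<^sub>k\<^sup>1(n)\<close> is affine in \<open>n\<close>, and averaging it over the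
binomial law of \<open>n\<close> given the user's own subscription gives \<open>U\<^sub>k\<close>. The formula for \<open>C\<^sub>k\<close> is only a
reindexing of the sum over \<open>n\<close>.\<close>

text \<open>\<open>drift lam mu n f x\<close> is \<open>(Q f)(x)\<close> for the generator \<open>Q\<close> of the chain. The truncated
subtractions \<open>fst x - 1\<close>, \<open>snd x - 1\<close> are harmless: their coefficients vanish at \<open>0\<close>.\<close>

definition drift :: "(nat \<Rightarrow> real) \<Rightarrow> (nat \<Rightarrow> real) \<Rightarrow> nat \<times> nat \<Rightarrow> (nat \<times> nat \<Rightarrow> real) \<Rightarrow> nat \<times> nat \<Rightarrow> real" where
  "drift lam mu n f x =
     real (fst n - fst x) * lam 1 * (f (Suc (fst x), snd x) - f x)
   + real (fst x) * mu 1 * (f (fst x - 1, snd x) - f x)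
   + real (snd n - snd x) * lam 2 * (f (fst x, Suc (snd x)) - f x)
   + real (snd x) * mu 2 * (f (fst x, snd x - 1) - f x)"

lemma finite_states [simp]: "finite (states n)"
  by (simp add: states_def)

lemma rate_altdef:
  "rate lam mu n x y =
     (if y = (Suc (fst x), snd x) then real (fst n - fst x) * lam 1 else 0)
   + (if 0 < fst x \<and> y = (fst x - 1, snd x) then real (fst x) * mu 1 else 0)
   + (if y = (fst x, Suc (snd x)) then real (snd n - snd x) * lam 2 else 0)
   + (if 0 < snd x \<and> y = (fst x, snd x - 1) then real (snd x) * mu 2 else 0)"
  unfolding rate_def by (cases x; cases y) auto

lemma sum_if_eq_mult:
  fixes c :: real
  assumes "finite S"
  shows "(\<Sum>y\<in>S. (if Q \<and> y = t then c else 0) * g y) = (if Q \<and> t \<in> S then c * g t else 0)"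
proof (cases Q)
  case True
  have "(\<Sum>y\<in>S. (if y = t then c else 0) * g y) = (\<Sum>y\<in>S. if y = t then c * g t else 0)"
    by (intro sum.cong) auto
  with True assms show ?thesis by simp
qed simp

lemma sum_rate_mult_diff_eq_drift:
  assumes "x \<in> states n"
  shows "(\<Sum>y\<in>states n. rate lam mu n x y * (f y - f x)) = drift lam mu n f x"
proof -
  have "(\<Sum>y\<in>states n. rate lam mu n x y * (f y - f x))
    = (\<Sum>y\<in>states n. (if True \<and> y = (Suc (fst x), snd x) then real (fst n - fst x) * lam 1 else 0) * (f y - f x))
    + (\<Sum>y\<in>states n. (if 0 < fst x \<and> y = (fst x - 1, snd x) then real (fst x) * mu 1 else 0) * (f y - f x))
    + (\<Sum>y\<in>states n. (if True \<and> y = (fst x, Suc (snd x)) then real (snd n - snd x) * lam 2 else 0) * (f y - f x))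
    + (\<Sum>y\<in>states n. (if 0 < snd x \<and> y = (fst x, snd x - 1) then real (snd x) * mu 2 else 0) * (f y - f x))"
    unfolding rate_altdef by (simp only: simp_thms distrib_right sum.distrib)
  also have "\<dots> = drift lam mu n f x"
    using assms unfolding sum_if_eq_mult[OF finite_states] drift_def
    by (cases x) (auto simp: states_def not_less_eq_eq)
  finally show ?thesis .
qed

lemma stationary_sum_drift_eq_0:
  assumes st: "stationary lam mu n p"
  shows "(\<Sum>x\<in>states n. p x * drift lam mu n f x) = 0"
proof -
  let ?S = "states n" and ?r = "rate lam mu n"
  have balance: "p x * (\<Sum>y\<in>?S. ?r x y) = (\<Sum>y\<in>?S. p y * ?r y x)" if "x \<in> ?S" for x
    using st that by (simp add: stationary_def)
  have "(\<Sum>x\<in>?S. p x * drift lam mu n f x) = (\<Sum>x\<in>?S. p x * (\<Sum>y\<in>?S. ?r x y * (f y - f x)))"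
    by (simp add: sum_rate_mult_diff_eq_drift)
  also have "\<dots> = (\<Sum>x\<in>?S. \<Sum>y\<in>?S. p x * ?r x y * f y) - (\<Sum>x\<in>?S. f x * (p x * (\<Sum>y\<in>?S. ?r x y)))"
    by (simp add: sum_distrib_left sum_subtractf algebra_simps)
  also have "(\<Sum>x\<in>?S. f x * (p x * (\<Sum>y\<in>?S. ?r x y))) = (\<Sum>x\<in>?S. \<Sum>y\<in>?S. f x * (p y * ?r y x))"
    by (intro sum.cong refl) (subst balance, auto simp: sum_distrib_left)
  also have "\<dots> = (\<Sum>y\<in>?S. \<Sum>x\<in>?S. f x * (p y * ?r y x))"
    by (rule sum.swap)
  finally show ?thesis by (simp add: algebra_simps)
qed

definition online_prob :: "(nat \<Rightarrow> real) \<Rightarrow> (nat \<Rightarrow> real) \<Rightarrow> nat \<Rightarrow> real" where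
  "online_prob lam mu j = lam j / (lam j + mu j)"

lemma sum_mult_affine:
  fixes p :: "'a \<Rightarrow> real"
  shows "(\<Sum>x\<in>S. p x * (c + d * g x + e * h x)) = c * sum p S + d * (\<Sum>x\<in>S. p x * g x) + e * (\<Sum>x\<in>S. p x * h x)"
proof -
  have "p x * (c + d * g x + e * h x) = c * p x + d * (p x * g x) + e * (p x * h x)" for x
    by (simp add: algebra_simps)
  then show ?thesis by (simp add: sum.distrib sum_distrib_left)
qed

lemma stationary_fst_moments:
  assumes st: "stationary lam mu n p" and pos: "0 < lam 1 + mu 1"
  shows "(\<Sum>x\<in>states n. p x * real (fst x)) = real (fst n) * online_prob lam mu 1"
    and "(\<Sum>x\<in>states n. p x * real (fst x) ^ 2)
           = real (fst n) * online_prob lam mu 1 * (1 + (real (fst n) - 1) * online_prob lam mu 1)"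
proof -
  let ?E = "\<lambda>g. \<Sum>x\<in>states n. p x * g x"
  let ?m = "real (fst n)" and ?s = "lam 1 + mu 1"
  have one: "sum p (states n) = 1" using st by (simp add: stationary_def)
  have le: "fst x \<le> fst n" if "x \<in> states n" for x using that by (auto simp: states_def)
  have "?E (drift lam mu n (\<lambda>x. real (fst x))) = ?E (\<lambda>x. ?m * lam 1 + (- ?s) * real (fst x) + 0 * 0)"
  proof (intro sum.cong refl)
    fix x assume "x \<in> states n"
    then show "p x * drift lam mu n (\<lambda>x. real (fst x)) x = p x * (?m * lam 1 + (- ?s) * real (fst x) + 0 * 0)"
      by (cases "fst x") (auto dest: le simp: drift_def of_nat_diff algebra_simps)
  qed
  then have "?s * ?E (\<lambda>x. real (fst x)) = ?m * lam 1"
    unfolding stationary_sum_drift_eq_0[OF st] sum_mult_affine one by (simp add: algebra_simps)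
  then show mean: "?E (\<lambda>x. real (fst x)) = ?m * online_prob lam mu 1"
    using pos by (simp add: online_prob_def field_simps)
  have "?E (drift lam mu n (\<lambda>x. real (fst x) ^ 2))
      = ?E (\<lambda>x. ?m * lam 1 + (2 * ?m * lam 1 - lam 1 + mu 1) * real (fst x) + (- 2 * ?s) * real (fst x) ^ 2)"
  proof (intro sum.cong refl)
    fix x assume "x \<in> states n"
    then show "p x * drift lam mu n (\<lambda>x. real (fst x) ^ 2) x
      = p x * (?m * lam 1 + (2 * ?m * lam 1 - lam 1 + mu 1) * real (fst x) + (- 2 * ?s) * real (fst x) ^ 2)"
      by (cases "fst x") (auto dest: le simp: drift_def algebra_simps power2_eq_square)
  qed
  then have second: "2 * ?s * ?E (\<lambda>x. real (fst x) ^ 2) = ?m * lam 1 + (2 * ?m * lam 1 - lam 1 + mu 1) * ?E (\<lambda>x. real (fst x))"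
    unfolding stationary_sum_drift_eq_0[OF st] sum_mult_affine one by (simp add: algebra_simps)
  have target: "2 * ?s * (?m * online_prob lam mu 1 * (1 + (?m - 1) * online_prob lam mu 1))
      = ?m * lam 1 + (2 * ?m * lam 1 - lam 1 + mu 1) * (?m * online_prob lam mu 1)"
  proof -
    \<comment> \<open>writing \<open>mu 1 = s - lam 1\<close> leaves \<open>s\<close> as the only denominator\<close>
    obtain s where s: "lam 1 + mu 1 = s" and mu: "mu 1 = s - lam 1"
      by (intro that[of "lam 1 + mu 1"]) simp_all
    show ?thesis using pos unfolding online_prob_def s mu by (simp add: field_simps)
  qed
  have "2 * ?s * ?E (\<lambda>x. real (fst x) ^ 2)
      = 2 * ?s * (?m * online_prob lam mu 1 * (1 + (?m - 1) * online_prob lam mu 1))"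
    unfolding second mean target ..
  then show "?E (\<lambda>x. real (fst x) ^ 2) = ?m * online_prob lam mu 1 * (1 + (?m - 1) * online_prob lam mu 1)"
    using pos by simp
qed

lemma sum_states_swap: "(\<Sum>y\<in>states (prod.swap n). g y) = (\<Sum>y\<in>states n. g (prod.swap y))"
proof -
  have "states (prod.swap n) = prod.swap ` states n"
    by (simp add: states_def product_swap)
  then show ?thesis by (simp add: sum.reindex)
qed

lemma rate_swap:
  "rate (lam \<circ> oth) (mu \<circ> oth) (prod.swap n) x y = rate lam mu n (prod.swap x) (prod.swap y)"
  by (simp add: rate_def oth_def conj_commute ac_simps)

text \<open>Exchanging the two user types maps the chain onto itself, so the moments of \<open>x\<^sub>2\<close> follow from
those of \<open>x\<^sub>1\<close>.\<close>

lemma stationary_swap: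
  assumes "stationary lam mu n p"
  shows "stationary (lam \<circ> oth) (mu \<circ> oth) (prod.swap n) (p \<circ> prod.swap)"
  using assms unfolding stationary_def sum_states_swap
  by (auto simp: rate_swap states_def)

lemma stationary_comp_moments:
  assumes st: "stationary lam mu n p" and k: "k \<in> {1, 2}" and pos: "0 < lam k + mu k"
  shows "(\<Sum>x\<in>states n. p x * real (comp k x)) = real (comp k n) * online_prob lam mu k"
    and "(\<Sum>x\<in>states n. p x * real (comp k x) ^ 2)
           = real (comp k n) * online_prob lam mu k * (1 + (real (comp k n) - 1) * online_prob lam mu k)"
proof -
  have "(\<Sum>x\<in>states n. p x * real (comp k x)) = real (comp k n) * online_prob lam mu k
      \<and> (\<Sum>x\<in>states n. p x * real (comp k x) ^ 2)
           = real (comp k n) * online_prob lam mu k * (1 + (real (comp k n) - 1) * online_prob lam mu k)"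
  proof (cases "k = 1")
    case True
    then show ?thesis using stationary_fst_moments[OF st] pos by (simp add: comp_def)
  next
    case False
    with k have "k = 2" by simp
    with pos have "0 < (lam \<circ> oth) 1 + (mu \<circ> oth) 1" by (simp add: oth_def)
    from stationary_fst_moments[OF stationary_swap[OF st] this] \<open>k = 2\<close> show ?thesis
      by (simp add: sum_states_swap comp_def online_prob_def oth_def)
  qed
  then show "(\<Sum>x\<in>states n. p x * real (comp k x)) = real (comp k n) * online_prob lam mu k"
    and "(\<Sum>x\<in>states n. p x * real (comp k x) ^ 2)
           = real (comp k n) * online_prob lam mu k * (1 + (real (comp k n) - 1) * online_prob lam mu k)"
    by auto
qed

lemma stationary_cross_moment:
  assumes st: "stationary lam mu n p" and pos: "0 < lam 1 + mu 1" "0 < lam 2 + mu 2"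
  shows "(\<Sum>x\<in>states n. p x * (real (fst x) * real (snd x)))
           = real (fst n) * online_prob lam mu 1 * (real (snd n) * online_prob lam mu 2)"
proof -
  let ?E = "\<lambda>g. \<Sum>x\<in>states n. p x * g x"
  let ?m1 = "real (fst n)" and ?m2 = "real (snd n)" and ?s = "lam 1 + mu 1 + (lam 2 + mu 2)"
  have mean1: "?E (\<lambda>x. real (fst x)) = ?m1 * online_prob lam mu 1"
    using stationary_comp_moments(1)[OF st _ pos(1)] by (simp add: comp_def)
  have mean2: "?E (\<lambda>x. real (snd x)) = ?m2 * online_prob lam mu 2"
    using stationary_comp_moments(1)[OF st _ pos(2)] by (simp add: comp_def)
  have "?E (drift lam mu n (\<lambda>x. real (fst x) * real (snd x)))
      = ?E (\<lambda>x. 0 + 1 * (?m2 * lam 2 * real (fst x) + ?m1 * lam 1 * real (snd x)) + (- ?s) * (real (fst x) * real (snd x)))"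
  proof (intro sum.cong refl)
    fix x assume "x \<in> states n"
    then obtain a b where x: "x = (a, b)" "a \<le> fst n" "b \<le> snd n" by (auto simp: states_def)
    then show "p x * drift lam mu n (\<lambda>x. real (fst x) * real (snd x)) x
      = p x * (0 + 1 * (?m2 * lam 2 * real (fst x) + ?m1 * lam 1 * real (snd x)) + (- ?s) * (real (fst x) * real (snd x)))"
      by (cases a; cases b) (simp_all add: drift_def of_nat_diff algebra_simps)
  qed
  moreover have "?E (\<lambda>x. ?m2 * lam 2 * real (fst x) + ?m1 * lam 1 * real (snd x))
      = ?m2 * lam 2 * (?m1 * online_prob lam mu 1) + ?m1 * lam 1 * (?m2 * online_prob lam mu 2)"
    using sum_mult_affine[of p 0 _ "\<lambda>x. real (fst x)" _ "\<lambda>x. real (snd x)"]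
    by (simp add: mean1 mean2)
  ultimately have cross: "?s * ?E (\<lambda>x. real (fst x) * real (snd x))
      = ?m2 * lam 2 * (?m1 * online_prob lam mu 1) + ?m1 * lam 1 * (?m2 * online_prob lam mu 2)"
    unfolding stationary_sum_drift_eq_0[OF st] sum_mult_affine by (simp add: algebra_simps)
  have target: "?s * (?m1 * online_prob lam mu 1 * (?m2 * online_prob lam mu 2))
      = ?m2 * lam 2 * (?m1 * online_prob lam mu 1) + ?m1 * lam 1 * (?m2 * online_prob lam mu 2)"
  proof -
    obtain s1 s2 where s: "lam 1 + mu 1 = s1" "lam 2 + mu 2 = s2"
      and mu: "mu 1 = s1 - lam 1" "mu 2 = s2 - lam 2"
      by (intro that[of "lam 1 + mu 1" "lam 2 + mu 2"]) simp_all
    show ?thesis using pos unfolding online_prob_def s mu by (simp add: field_simps)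
  qed
  have "?s * ?E (\<lambda>x. real (fst x) * real (snd x)) = ?s * (?m1 * online_prob lam mu 1 * (?m2 * online_prob lam mu 2))"
    unfolding cross target ..
  then show ?thesis using pos by simp
qed

lemma comp_mult_util_tau:
  assumes "k \<in> {1, 2}"
  shows "real (comp k x) * util al be k (tau x)
           = al k * real (comp k x) - be k * (real (comp k x) ^ 2 + real (fst x) * real (snd x))"
  using assms by (cases "fst x + snd x = 0") (auto simp: comp_def util_def tau_def power2_eq_square algebra_simps)

lemma stationary_comp_cross_moment:
  assumes st: "stationary lam mu n p" and k: "k \<in> {1, 2}" and pos: "0 < lam 1 + mu 1" "0 < lam 2 + mu 2"
  shows "(\<Sum>x\<in>states n. p x * (real (fst x) * real (snd x)))
           = real (comp k n) * online_prob lam mu k * (real (comp (oth k) n) * online_prob lam mu (oth k))"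
  using stationary_cross_moment[OF st pos] k by (auto simp: comp_def oth_def)

lemma V1_closed_form:
  assumes st: "stationary lam mu n (P n)" and k: "k \<in> {1, 2}"
    and pos: "0 < lam 1 + mu 1" "0 < lam 2 + mu 2" and n: "1 \<le> comp k n"
  shows "V1 dT al be P k n = dT * online_prob lam mu k *
           (al k - be k * (1 + (real (comp k n) - 1) * online_prob lam mu k
                             + real (comp (oth k) n) * online_prob lam mu (oth k)))"
proof -
  let ?E = "\<lambda>g. \<Sum>x\<in>states n. P n x * g x"
  let ?c = "\<lambda>x. real (comp k x)" and ?\<rho> = "online_prob lam mu"
  have posk: "0 < lam k + mu k" using k pos by auto
  have "V1 dT al be P k n = dT / ?c n * ?E (\<lambda>x. ?c x * util al be k (tau x))"
    unfolding V1_def by (simp add: sum_divide_distrib[symmetric] mult.assoc)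
  also have "\<dots> = dT / ?c n * ?E (\<lambda>x. 0 + al k * ?c x + (- be k) * (?c x ^ 2 + real (fst x) * real (snd x)))"
    by (simp add: comp_mult_util_tau[OF k])
  also have "\<dots> = dT / ?c n * (al k * ?E ?c - be k * (?E (\<lambda>x. ?c x ^ 2) + ?E (\<lambda>x. real (fst x) * real (snd x))))"
    unfolding sum_mult_affine by (simp add: sum.distrib algebra_simps flip: add_divide_distrib)
  also have "\<dots> = dT * ?\<rho> k * (al k - be k * (1 + (?c n - 1) * ?\<rho> k + real (comp (oth k) n) * ?\<rho> (oth k)))"
    unfolding stationary_comp_moments[OF st k posk] stationary_comp_cross_moment[OF st k pos]
    using n by (simp add: field_simps)
  finally show ?thesis .
qed

definition binomial_weight :: "nat \<Rightarrow> real \<Rightarrow> nat \<Rightarrow> real" where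
  "binomial_weight m p j = real (m choose j) * p ^ j * (1 - p) ^ (m - j)"

lemma sum_binomial_weight: "(\<Sum>j\<le>m. binomial_weight m p j) = 1"
  using binomial_ring[of p "1 - p" m] by (simp add: binomial_weight_def)

lemma sum_binomial_weight_mult: "(\<Sum>j\<le>m. binomial_weight m p j * real j) = real m * p"
proof (cases m)
  case (Suc m')
  have "(\<Sum>j\<le>Suc m'. binomial_weight (Suc m') p j * real j)
      = (\<Sum>j\<le>m'. binomial_weight (Suc m') p (Suc j) * real (Suc j))"
    by (subst sum.atMost_Suc_shift) simp
  also have "\<dots> = (\<Sum>j\<le>m'. real (Suc m') * p * binomial_weight m' p j)"
  proof (intro sum.cong refl)
    fix j
    have "real (Suc m' choose Suc j) * real (Suc j) = real (Suc m') * real (m' choose j)"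
      using Suc_times_binomial[of j m'] by (metis mult.commute of_nat_mult)
    then show "binomial_weight (Suc m') p (Suc j) * real (Suc j) = real (Suc m') * p * binomial_weight m' p j"
      unfolding binomial_weight_def by (simp only: power_Suc diff_Suc_Suc) (simp add: ac_simps)
  qed
  also have "\<dots> = real (Suc m') * p"
    by (simp add: sum_distrib_left[symmetric] sum_binomial_weight)
  finally show ?thesis using Suc by simp
qed simp

lemma sum_binomial_weight_affine:
  "(\<Sum>j\<le>m1. \<Sum>b\<le>m2. binomial_weight m1 p1 j * binomial_weight m2 p2 b * (c0 + c1 * real j + c2 * real b))
     = c0 + c1 * (real m1 * p1) + c2 * (real m2 * p2)"
proof -
  have inner: "(\<Sum>b\<le>m2. binomial_weight m1 p1 j * binomial_weight m2 p2 b * (c0 + c1 * real j + c2 * real b))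
      = binomial_weight m1 p1 j * ((c0 + c2 * (real m2 * p2)) + c1 * real j + 0 * 0)" for j
  proof -
    have "(\<Sum>b\<le>m2. binomial_weight m1 p1 j * binomial_weight m2 p2 b * (c0 + c1 * real j + c2 * real b))
        = binomial_weight m1 p1 j * (\<Sum>b\<le>m2. binomial_weight m2 p2 b * ((c0 + c1 * real j) + c2 * real b + 0 * 0))"
      by (simp add: sum_distrib_left mult.assoc)
    also have "\<dots> = binomial_weight m1 p1 j * ((c0 + c2 * (real m2 * p2)) + c1 * real j + 0 * 0)"
      unfolding sum_mult_affine sum_binomial_weight sum_binomial_weight_mult by simp
    finally show ?thesis .
  qed
  show ?thesis
    unfolding inner unfolding sum_mult_affine sum_binomial_weight sum_binomial_weight_mult by simp
qed

lemma comp_mkp [simp]: "k \<in> {1, 2} \<Longrightarrow> comp k (mkp k a b) = a"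
  by (auto simp: comp_def mkp_def)

lemma comp_oth_mkp [simp]: "k \<in> {1, 2} \<Longrightarrow> comp (oth k) (mkp k a b) = b"
  by (auto simp: comp_def mkp_def oth_def)

lemma pmf_cond_n_mkp:
  assumes k: "k \<in> {1, 2}" and probs: "\<forall>j\<in>{1, 2}. 0 \<le> pr j \<and> pr j \<le> 1"
  shows "pmf (cond_n N pr k) (mkp k (Suc j) b)
           = binomial_weight (N k - 1) (pr k) j * binomial_weight (N (oth k)) (pr (oth k)) b"
  using k probs by (auto simp: cond_n_def mkp_def oth_def pmf_pair pmf_map_inj' binomial_weight_def)

lemma sum_nset_cond_n:
  assumes k: "k \<in> {1, 2}" and N: "1 \<le> N k" and probs: "\<forall>j\<in>{1, 2}. 0 \<le> pr j \<and> pr j \<le> 1"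
  shows "(\<Sum>n\<in>nset N k. pmf (cond_n N pr k) n * g n)
           = (\<Sum>j\<le>N k - 1. \<Sum>b\<le>N (oth k).
                binomial_weight (N k - 1) (pr k) j * binomial_weight (N (oth k)) (pr (oth k)) b
                * g (mkp k (Suc j) b))"
proof -
  have "(\<Sum>n\<in>nset N k. pmf (cond_n N pr k) n * g n)
      = (\<Sum>(j, b)\<in>{..N k - 1} \<times> {..N (oth k)}. pmf (cond_n N pr k) (mkp k (Suc j) b) * g (mkp k (Suc j) b))"
    by (rule sum.reindex_bij_witness[where i = "\<lambda>(j, b). mkp k (Suc j) b" and j = "\<lambda>n. (comp k n - 1, comp (oth k) n)"])
      (use k N in \<open>auto simp: nset_def comp_def mkp_def oth_def\<close>)
  then show ?thesis
    by (simp add: sum.cartesian_product pmf_cond_n_mkp[OF k probs])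
qed

lemma Bhat_eq_sum:
  assumes "1 \<le> N k"
  shows "Bhat dT N P pr k
           = (\<Sum>j\<le>N k - 1. \<Sum>b\<le>N (oth k).
                binomial_weight (N k - 1) (pr k) j * binomial_weight (N (oth k)) (pr (oth k)) b
                * B1 dT P k (mkp k (Suc j) b))"
proof -
  have bounds: "{1..N k} = {Suc 0..Suc (N k - 1)}" using assms by simp
  show ?thesis
    unfolding Bhat_def bounds sum.shift_bounds_cl_Suc_ivl
    by (simp add: binomial_weight_def atLeast0AtMost mult.assoc)
qed

lemma Uk_closed_form:
  assumes k: "k \<in> {1, 2}" and N: "1 \<le> N k"
    and pos: "0 < lam 1 + mu 1" "0 < lam 2 + mu 2"
    and probs: "\<forall>j\<in>{1, 2}. 0 \<le> pr j \<and> pr j \<le> 1"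
    and steady: "\<forall>n. stationary lam mu n (P n)"
  shows "Uk dT N al be P pr pi' k = pi' * dT * online_prob lam mu k *
           (al k - be k * (1 + (real (N k) - 1) * pr k * online_prob lam mu k
                             + real (N (oth k)) * pr (oth k) * online_prob lam mu (oth k)))"
proof -
  let ?\<rho> = "online_prob lam mu"
  define c0 where "c0 = dT * ?\<rho> k * (al k - be k)"
  define c1 where "c1 = - dT * ?\<rho> k * be k * ?\<rho> k"
  define c2 where "c2 = - dT * ?\<rho> k * be k * ?\<rho> (oth k)"
  have V1: "V1 dT al be P k (mkp k (Suc j) b) = c0 + c1 * real j + c2 * real b" for j b
    using V1_closed_form[where P = P and n = "mkp k (Suc j) b" and dT = dT and al = al and be = be, OF steady[rule_format] k pos] k
    by (simp add: c0_def c1_def c2_def algebra_simps)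
  have expected_V1: "(\<Sum>n\<in>nset N k. pmf (cond_n N pr k) n * V1 dT al be P k n)
      = c0 + c1 * (real (N k - 1) * pr k) + c2 * (real (N (oth k)) * pr (oth k))"
    unfolding sum_nset_cond_n[where N = N and pr = pr, OF k N probs] V1 by (rule sum_binomial_weight_affine)
  show ?thesis
    using N unfolding Uk_def expected_V1 by (simp add: c0_def c1_def c2_def of_nat_diff algebra_simps)
qed

lemma Ck_closed_form:
  assumes k: "k \<in> {1, 2}" and N: "1 \<le> N k" and probs: "\<forall>j\<in>{1, 2}. 0 \<le> pr j \<and> pr j \<le> 1"
  shows "Ck dT N P ps q pr pi' k = pi' * (ps + q * Bhat dT N P pr k)"
proof -
  have "(\<Sum>n\<in>nset N k. pmf (cond_n N pr k) n * q * B1 dT P k n)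
      = q * (\<Sum>n\<in>nset N k. pmf (cond_n N pr k) n * B1 dT P k n)"
    by (simp add: sum_distrib_left algebra_simps)
  also have "\<dots> = q * Bhat dT N P pr k"
    unfolding sum_nset_cond_n[where N = N and pr = pr, OF k N probs] Bhat_eq_sum[where N = N, OF N] ..
  finally show ?thesis unfolding Ck_def by simp
qed

theorem lemma2:
  fixes N :: "nat \<Rightarrow> nat" and lam mu al be pr :: "nat \<Rightarrow> real"
    and dT ps q pi' :: real and k :: nat
    and P :: "nat \<times> nat \<Rightarrow> nat \<times> nat \<Rightarrow> real"
  assumes k: "k \<in> {1, 2}"
    and Npos: "1 \<le> N k"
    and rates: "\<forall>j\<in>{1,2::nat}. 0 < lam j \<and> 0 < mu j"
    and probs: "\<forall>j\<in>{1,2::nat}. 0 \<le> pr j \<and> pr j \<le> 1"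
    and pi': "0 \<le> pi' \<and> pi' \<le> 1"
    and prices: "0 \<le> ps" "0 \<le> q"
    and steady: "\<forall>n. stationary lam mu n (P n)"
  shows "Uk dT N al be P pr pi' k =
           pi' * dT * (lam k / (lam k + mu k)) *
             (al k - be k * (1 + lam k * (real (N k) - 1) / (lam k + mu k) * pr k
                               + lam (oth k) * real (N (oth k)) / (lam (oth k) + mu (oth k)) * pr (oth k)))
       \<and> Ck dT N P ps q pr pi' k = pi' * (ps + q * Bhat dT N P pr k)"
proof
  have pos: "0 < lam 1 + mu 1" "0 < lam 2 + mu 2"
    using rates by (auto intro: add_pos_pos)
  have "lam k / (lam k + mu k) = online_prob lam mu k"
    and "lam k * (real (N k) - 1) / (lam k + mu k) * pr k = (real (N k) - 1) * pr k * online_prob lam mu k"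
    and "lam (oth k) * real (N (oth k)) / (lam (oth k) + mu (oth k)) * pr (oth k)
           = real (N (oth k)) * pr (oth k) * online_prob lam mu (oth k)"
    by (simp_all add: online_prob_def)
  then show "Uk dT N al be P pr pi' k =
           pi' * dT * (lam k / (lam k + mu k)) *
             (al k - be k * (1 + lam k * (real (N k) - 1) / (lam k + mu k) * pr k
                               + lam (oth k) * real (N (oth k)) / (lam (oth k) + mu (oth k)) * pr (oth k)))"
    by (simp only:) (intro Uk_closed_form k Npos pos probs steady)
  show "Ck dT N P ps q pr pi' k = pi' * (ps + q * Bhat dT N P pr k)"
    by (rule Ck_closed_form[where N = N and pr = pr, OF k Npos probs])
qed

end
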